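(* In the setting below, let $\varepsilon:U(N)\to k$ be the augmentation map. Then: (1) there is a $k$-algebra homomorphism $\Phi_w:U(N)((t_w;\delta_w))\to k((t_z))$, $\sum_i t_w^if_i\mapsto\sum_i t_z^i\varepsilon(f_i)$ ($f_i\in U(N)$); (2) there is a $k$-algebra homomorphism $\Phi_v:U(N)((t_w;\delta_w))((t_v;\delta_v))\to k((t_z))((t_y))$, $\sum_i t_v^ig_i\mapsto\sum_i t_y^i\Phi_w(g_i)$; (3) there is a $k$-algebra homomorphism $\Phi_u:U(N)((t_w;\delta_w))((t_v;\delta_v))((t_u;\delta_u))\to k((t_z))((t_y))((t_x;\delta_x))$, $\sum_it_u^ih_i\mapsto\sum_it_x^i\Phi_v(h_i)$.
   Context: Let $k$ be a field, $H=\langle x,y\mid[[y,x],x]=[[y,x],y]=0\rangle$ the Heisenberg Lie $k$-algebra, $z=[y,x]$; $L$ a Lie $k$-algebra generated by $u,v$ with a Lie homomorphism $\rho:L\to H$, $u\mapsto x$, $v\mapsto y$; $N=\ker\rho$, $w=[v,u]$. For an element $s$ of an algebra, $\delta_s(f)=fs-sf$. For a $k$-algebra $R$ with derivation $\delta$, $R((t;\delta))$ is the ring of Laurent series $\sum_{i\ge n}t^ia_i$ ($a_i\in R$) with $at^{-1}=t^{-1}a+\delta(a)$, i.e. $at=\sum_{i\ge1}t^i(-1)^{i-1}\delta^{i-1}(a)$; when $\delta=0$ we write $R((t))$. Here $\delta_w$ is the restriction to $U(N)$ of the inner derivation by $w$ in $U(L)$; $\delta_v$ is extended from $U(N)[w;\delta_w]$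 to $U(N)((t_w;\delta_w))$ by $\delta_v(t_w)=-t_w\delta_v(w)t_w$ and termwise on series; $\delta_u$ is extended similarly to $U(N)((t_w;\delta_w))((t_v;\delta_v))$ with $\delta_u(t_w)=-t_w\delta_u(w)t_w$, $\delta_u(t_v)=-t_v w t_v$. On the other side $\delta_x$ is the derivation of $k((t_z))((t_y))$ with $\delta_x(k)=0$, $\delta_x(t_z)=0$, $\delta_x(t_y)=-t_yzt_y$ (with $z=t_z^{-1}$), acting termwise on series. The augmentation $\varepsilon$ is the $k$-algebra homomorphism $U(N)\to k$ with $\varepsilon(N)=0$. *)

theory Defs
  imports "HOL.Vector_Spaces" "HOL-Algebra.Ring" "HOL-Library.Product_Plus"
begin

definition lie_algebra :: "('k::field \<Rightarrow> 'l::ab_group_add \<Rightarrow> 'l) \<Rightarrow> ('l \<Rightarrow> 'l \<Rightarrow> 'l) \<Rightarrow> bool" where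
  "lie_algebra sm br \<longleftrightarrow> Vector_Spaces.vector_space sm
     \<and> (\<forall>a b c. br (a + b) c = br a c + br b c)
     \<and> (\<forall>a b c. br a (b + c) = br a b + br a c)
     \<and> (\<forall>r a b. br (sm r a) b = sm r (br a b))
     \<and> (\<forall>r a b. br a (sm r b) = sm r (br a b))
     \<and> (\<forall>a. br a a = 0)
     \<and> (\<forall>a b c. br a (br b c) + br b (br c a) + br c (br a b) = 0)"

inductive_set lie_gen :: "('k::field \<Rightarrow> 'l::ab_group_add \<Rightarrow> 'l) \<Rightarrow> ('l \<Rightarrow> 'l \<Rightarrow> 'l) \<Rightarrow> 'l set \<Rightarrow> 'l set"
  for sm br S where
  base: "a \<in> S \<Longrightarrow> a \<in> lie_gen sm br S"
| add: "a \<in> lie_gen sm br S \<Longrightarrow> b \<in> lie_gen sm br S \<Longrightarrow> a + b \<in> lie_gen sm br S"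
| scal: "a \<in> lie_gen sm br S \<Longrightarrow> sm r a \<in> lie_gen sm br S"
| brk: "a \<in> lie_gen sm br S \<Longrightarrow> b \<in> lie_gen sm br S \<Longrightarrow> br a b \<in> lie_gen sm br S"

definition lie_hom :: "('k::field \<Rightarrow> 'l::ab_group_add \<Rightarrow> 'l) \<Rightarrow> ('l \<Rightarrow> 'l \<Rightarrow> 'l)
   \<Rightarrow> ('k \<Rightarrow> 'm::ab_group_add \<Rightarrow> 'm) \<Rightarrow> ('m \<Rightarrow> 'm \<Rightarrow> 'm) \<Rightarrow> ('l \<Rightarrow> 'm) \<Rightarrow> bool" where
  "lie_hom sm br sm' br' f \<longleftrightarrow>
     (\<forall>a b. f (a + b) = f a + f b) \<and> (\<forall>r a. f (sm r a) = sm' r (f a))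
     \<and> (\<forall>a b. f (br a b) = br' (f a) (f b))"

section \<open>The Heisenberg Lie algebra H, realised on k^3 with basis x, y, z = [y,x]\<close>

definition heis_sm :: "'k::field \<Rightarrow> 'k \<times> 'k \<times> 'k \<Rightarrow> 'k \<times> 'k \<times> 'k" where
  "heis_sm c p = (c * fst p, c * fst (snd p), c * snd (snd p))"

definition heis_br :: "'k::field \<times> 'k \<times> 'k \<Rightarrow> 'k \<times> 'k \<times> 'k \<Rightarrow> 'k \<times> 'k \<times> 'k" where
  "heis_br p q = (0, 0, fst (snd p) * fst q - fst p * fst (snd q))"

definition hx :: "'k::field \<times> 'k \<times> 'k" where "hx = (1, 0, 0)"
definition hy :: "'k::field \<times> 'k \<times> 'k" where "hy = (0, 1, 0)"
definition hz :: "'k::field \<times> 'k \<times> 'k" where "hz = (0, 0, 1)"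

section \<open>Universal enveloping algebra U(L) = free algebra on L modulo the usual relations\<close>

definition fa_carrier :: "('l list \<Rightarrow> 'k::field) set" where
  "fa_carrier = {f. finite {w. f w \<noteq> 0}}"

definition fadd :: "('l list \<Rightarrow> 'k::field) \<Rightarrow> ('l list \<Rightarrow> 'k) \<Rightarrow> ('l list \<Rightarrow> 'k)" where
  "fadd f g = (\<lambda>w. f w + g w)"

definition fsc :: "'k::field \<Rightarrow> ('l list \<Rightarrow> 'k) \<Rightarrow> ('l list \<Rightarrow> 'k)" where
  "fsc c f = (\<lambda>w. c * f w)"

definition fmul :: "('l list \<Rightarrow> 'k::field) \<Rightarrow> ('l list \<Rightarrow> 'k) \<Rightarrow> ('l list \<Rightarrow> 'k)" where
  "fmul f g = (\<lambda>w. \<Sum>i\<in>{0..length w}. f (take i w) * g (drop i w))"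

definition fzero :: "'l list \<Rightarrow> 'k::field" where "fzero = (\<lambda>w. 0)"
definition fone :: "'l list \<Rightarrow> 'k::field" where "fone = (\<lambda>w. if w = [] then 1 else 0)"
definition fgen :: "'l \<Rightarrow> 'l list \<Rightarrow> 'k::field" where "fgen a = (\<lambda>w. if w = [a] then 1 else 0)"

definition fa_rels :: "('k::field \<Rightarrow> 'l::ab_group_add \<Rightarrow> 'l) \<Rightarrow> ('l \<Rightarrow> 'l \<Rightarrow> 'l) \<Rightarrow> ('l list \<Rightarrow> 'k) set" where
  "fa_rels sm br =
     {fadd (fgen (a + b)) (fsc (-1) (fadd (fgen a) (fgen b))) | a b. True}
   \<union> {fadd (fgen (sm c a)) (fsc (- c) (fgen a)) | c a. True}
   \<union> {fadd (fmul (fgen a) (fgen b)) (fsc (-1) (fadd (fmul (fgen b) (fgen a)) (fgen (br a b)))) | a b. True}"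

definition fa_ideal :: "('k::field \<Rightarrow> 'l::ab_group_add \<Rightarrow> 'l) \<Rightarrow> ('l \<Rightarrow> 'l \<Rightarrow> 'l) \<Rightarrow> ('l list \<Rightarrow> 'k) set" where
  "fa_ideal sm br = \<Inter>{J. J \<subseteq> fa_carrier \<and> fa_rels sm br \<subseteq> J \<and> fzero \<in> J
      \<and> (\<forall>f\<in>J. \<forall>g\<in>J. fadd f g \<in> J)
      \<and> (\<forall>f\<in>J. \<forall>g\<in>fa_carrier. fmul f g \<in> J \<and> fmul g f \<in> J)}"

definition ul_cls :: "('k::field \<Rightarrow> 'l::ab_group_add \<Rightarrow> 'l) \<Rightarrow> ('l \<Rightarrow> 'l \<Rightarrow> 'l) \<Rightarrow> ('l list \<Rightarrow> 'k) \<Rightarrow> ('l list \<Rightarrow> 'k) set" where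
  "ul_cls sm br f = {g \<in> fa_carrier. fadd g (fsc (-1) f) \<in> fa_ideal sm br}"

definition ul_rep :: "('l list \<Rightarrow> 'k::field) set \<Rightarrow> ('l list \<Rightarrow> 'k)" where
  "ul_rep X = (SOME f. f \<in> X)"

definition UL_ring :: "('k::field \<Rightarrow> 'l::ab_group_add \<Rightarrow> 'l) \<Rightarrow> ('l \<Rightarrow> 'l \<Rightarrow> 'l) \<Rightarrow> ('l list \<Rightarrow> 'k) set ring" where
  "UL_ring sm br =
    \<lparr>carrier = {ul_cls sm br f | f. f \<in> fa_carrier},
     mult = (\<lambda>X Y. ul_cls sm br (fmul (ul_rep X) (ul_rep Y))),
     one = ul_cls sm br fone,
     zero = ul_cls sm br fzero,
     add = (\<lambda>X Y. ul_cls sm br (fadd (ul_rep X) (ul_rep Y)))\<rparr>"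

definition ul_sc :: "('k::field \<Rightarrow> 'l::ab_group_add \<Rightarrow> 'l) \<Rightarrow> ('l \<Rightarrow> 'l \<Rightarrow> 'l) \<Rightarrow> 'k \<Rightarrow> ('l list \<Rightarrow> 'k) set \<Rightarrow> ('l list \<Rightarrow> 'k) set" where
  "ul_sc sm br c X = ul_cls sm br (fsc c (ul_rep X))"

definition ul_gen :: "('k::field \<Rightarrow> 'l::ab_group_add \<Rightarrow> 'l) \<Rightarrow> ('l \<Rightarrow> 'l \<Rightarrow> 'l) \<Rightarrow> 'l \<Rightarrow> ('l list \<Rightarrow> 'k) set" where
  "ul_gen sm br a = ul_cls sm br (fgen a)"

text \<open>U(N) for N \<subseteq> L, viewed (via PBW) as the subalgebra of U(L) generated by N\<close>
inductive_set un_set :: "('k::field \<Rightarrow> 'l::ab_group_add \<Rightarrow> 'l) \<Rightarrow> ('l \<Rightarrow> 'l \<Rightarrow> 'l) \<Rightarrow> 'l set \<Rightarrow> ('l list \<Rightarrow> 'k) set set"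
  for sm br N where
  scal: "ul_sc sm br c (one (UL_ring sm br)) \<in> un_set sm br N"
| gen: "n \<in> N \<Longrightarrow> ul_gen sm br n \<in> un_set sm br N"
| add: "X \<in> un_set sm br N \<Longrightarrow> Y \<in> un_set sm br N \<Longrightarrow> add (UL_ring sm br) X Y \<in> un_set sm br N"
| mult: "X \<in> un_set sm br N \<Longrightarrow> Y \<in> un_set sm br N \<Longrightarrow> mult (UL_ring sm br) X Y \<in> un_set sm br N"

definition UN_ring :: "('k::field \<Rightarrow> 'l::ab_group_add \<Rightarrow> 'l) \<Rightarrow> ('l \<Rightarrow> 'l \<Rightarrow> 'l) \<Rightarrow> 'l set \<Rightarrow> ('l list \<Rightarrow> 'k) set ring" where
  "UN_ring sm br N = (UL_ring sm br)\<lparr>carrier := un_set sm br N\<rparr>"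

definition ul_der :: "('k::field \<Rightarrow> 'l::ab_group_add \<Rightarrow> 'l) \<Rightarrow> ('l \<Rightarrow> 'l \<Rightarrow> 'l) \<Rightarrow> 'l \<Rightarrow> ('l list \<Rightarrow> 'k) set \<Rightarrow> ('l list \<Rightarrow> 'k) set" where
  "ul_der sm br s X = a_minus (UL_ring sm br) (mult (UL_ring sm br) X (ul_gen sm br s)) (mult (UL_ring sm br) (ul_gen sm br s) X)"

definition K_ring :: "'k::field ring" where
  "K_ring = \<lparr>carrier = UNIV, mult = (*), one = 1, zero = 0, add = (+)\<rparr>"

section \<open>Skew Laurent series R((t;d)): series \<Sum>_{i\<ge>n} t^i a_i represented by i \<mapsto> a_i\<close>

definition ls_carrier :: "('a, 'm) ring_scheme \<Rightarrow> (int \<Rightarrow> 'a) set" where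
  "ls_carrier R = {f. (\<forall>i. f i \<in> carrier R) \<and> (\<exists>n. \<forall>i<n. f i = zero R)}"

text \<open>Multiplication, using a t^j = \<Sum>_{k\<ge>0} (-j choose k) t^(j+k) d^k(a), which follows from
  a t^-1 = t^-1 a + d(a); for j=1 this is a t = \<Sum>_{k\<ge>0} t^(1+k) (-1)^k d^k(a).\<close>
definition int_binom :: "int \<Rightarrow> nat \<Rightarrow> int" where
  "int_binom m k = (if 0 \<le> m then int (nat m choose k) else (-1) ^ k * int ((nat (- m) + k - 1) choose k))"

definition ls_mult :: "('a, 'm) ring_scheme \<Rightarrow> ('a \<Rightarrow> 'a) \<Rightarrow> (int \<Rightarrow> 'a) \<Rightarrow> (int \<Rightarrow> 'a) \<Rightarrow> (int \<Rightarrow> 'a)" where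
  "ls_mult R d f g = (\<lambda>n. finsum R
      (\<lambda>(j :: int, k :: nat). add_pow R (int_binom (- j) k) (mult R ((d ^^ k) (f (n - j - int k))) (g j)))
      {(j :: int, k :: nat). f (n - j - int k) \<noteq> zero R \<and> g j \<noteq> zero R})"

definition ls_one :: "('a, 'm) ring_scheme \<Rightarrow> int \<Rightarrow> 'a" where
  "ls_one R = (\<lambda>i. if i = 0 then one R else zero R)"

definition LS :: "('a, 'm) ring_scheme \<Rightarrow> ('a \<Rightarrow> 'a) \<Rightarrow> (int \<Rightarrow> 'a) ring" where
  "LS R d = \<lparr>carrier = ls_carrier R, mult = ls_mult R d, one = ls_one R,
             zero = (\<lambda>i. zero R), add = (\<lambda>f g i. add R (f i) (g i))\<rparr>"

definition ls_t :: "('a, 'm) ring_scheme \<Rightarrow> int \<Rightarrow> int \<Rightarrow> 'a" where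
  "ls_t R i = (\<lambda>j. if j = i then one R else zero R)"

definition ls_const :: "('a, 'm) ring_scheme \<Rightarrow> 'a \<Rightarrow> int \<Rightarrow> 'a" where
  "ls_const R a = (\<lambda>j. if j = 0 then a else zero R)"

definition ls_sum :: "('a, 'm) ring_scheme \<Rightarrow> (int \<Rightarrow> int \<Rightarrow> 'a) \<Rightarrow> int \<Rightarrow> 'a" where
  "ls_sum R F = (\<lambda>n. finsum R (\<lambda>i. F i n) {i. F i n \<noteq> zero R})"

text \<open>Given a derivation D of R and c = D(t^-1) \<in> R, the value D(t^i) in R((t;d)),
  determined by D(t) = - t c t and the Leibniz rule (D(t^-1) = c).\<close>
definition ls_der_t :: "('a, 'm) ring_scheme \<Rightarrow> ('a \<Rightarrow> 'a) \<Rightarrow> 'a \<Rightarrow> int \<Rightarrow> int \<Rightarrow> 'a" where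
  "ls_der_t R d c i =
     (if 0 < i then
        finsum (LS R d) (\<lambda>a. ls_mult R d (ls_t R a)
            (ls_mult R d (\<lambda>j. a_inv R (ls_mult R d (ls_t R 1) (ls_mult R d (ls_const R c) (ls_t R 1)) j))
               (ls_t R (i - 1 - a)))) {0..i - 1}
      else if i < 0 then
        finsum (LS R d) (\<lambda>a. ls_mult R d (ls_t R (- a))
            (ls_mult R d (ls_const R c) (ls_t R (- (- i - 1 - a))))) {0..- i - 1}
      else (\<lambda>j. zero R))"

text \<open>Extension of the derivation D of R to R((t;d)) by D(t) = -t c t, termwise on series:
  D(\<Sum> t^i a_i) = \<Sum> (D(t^i) a_i + t^i D(a_i)).\<close>
definition ls_der :: "('a, 'm) ring_scheme \<Rightarrow> ('a \<Rightarrow> 'a) \<Rightarrow> ('a \<Rightarrow> 'a) \<Rightarrow> 'a \<Rightarrow> (int \<Rightarrow> 'a) \<Rightarrow> int \<Rightarrow> 'a" where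
  "ls_der R d D c f =
     (\<lambda>n. add R (ls_sum R (\<lambda>i. ls_mult R d (ls_der_t R d c i) (ls_const R (f i))) n) (D (f n)))"

definition ls_sc :: "('k \<Rightarrow> 'a \<Rightarrow> 'a) \<Rightarrow> 'k \<Rightarrow> (int \<Rightarrow> 'a) \<Rightarrow> int \<Rightarrow> 'a" where
  "ls_sc sc c f = (\<lambda>i. sc c (f i))"

definition ls_map :: "('a \<Rightarrow> 'b) \<Rightarrow> (int \<Rightarrow> 'a) \<Rightarrow> int \<Rightarrow> 'b" where
  "ls_map h f = (\<lambda>i. h (f i))"

definition k_alg_hom :: "('a, 'm) ring_scheme \<Rightarrow> ('b, 'n) ring_scheme \<Rightarrow> ('k \<Rightarrow> 'a \<Rightarrow> 'a) \<Rightarrow> ('k \<Rightarrow> 'b \<Rightarrow> 'b)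
    \<Rightarrow> ('a \<Rightarrow> 'b) \<Rightarrow> bool" where
  "k_alg_hom R S scR scS h \<longleftrightarrow> h \<in> ring_hom R S \<and>
     (\<forall>c x. x \<in> carrier R \<longrightarrow> h (scR c x) = scS c (h x))"

end

theory Submission
  imports Defs "HOL-Algebra.Subrings"
begin

text \<open>
  Each of the three maps is the coefficientwise extension \<open>ls_map h\<close> of the map
  \<open>h\<close> one level down (\<open>\<epsilon>\<close>, then \<open>\<Phi>\<^sub>w\<close>, then \<open>\<Phi>\<^sub>v\<close>).  The product of skew Laurent series
  \<open>R((t;d))\<close> is given coefficientwise by a finite sum built from the ring operations of \<open>R\<close>
  and the powers of \<open>d\<close>; hence \<open>ls_map h\<close> is multiplicative as soon as \<open>h\<close> is a ring
  homomorphism with \<open>h \<circ> d = d' \<circ> h\<close>.  Likewise the extension \<open>ls_der R d D c\<close> of a further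
  derivation \<open>D\<close> is built from \<open>t\<close>, \<open>c\<close> and the ring operations, so \<open>ls_map h\<close> carries it to
  \<open>ls_der S d' D' (h c)\<close> whenever \<open>h \<circ> D = D' \<circ> h\<close>.  Everything thus reduces to the base
  case \<open>\<epsilon> \<circ> \<delta>\<^sub>s = 0\<close> on \<open>U(N)\<close>, which holds because \<open>N = ker \<rho>\<close> is an ideal of \<open>L\<close>, and to
  \<open>\<epsilon>(\<delta>\<^sub>v(w)) = \<epsilon>(\<delta>\<^sub>u(w)) = 0\<close>, which holds because \<open>w\<close> maps to the central element \<open>z\<close>.
\<close>

section \<open>The free algebra \<open>k\<langle>L\<rangle>\<close>\<close>

lemma fmul_Nil: "fmul f g [] = f [] * g []"
  by (simp add: fmul_def)

text \<open>Splitting off the first letter: the recursion behind associativity and the unit laws.\<close>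
lemma fmul_Cons: "fmul f g (x # w) = f [] * g (x # w) + fmul (\<lambda>v. f (x # v)) g w"
proof -
  have "fmul f g (x # w) = (\<Sum>i\<le>Suc (length w). f (take i (x # w)) * g (drop i (x # w)))"
    by (simp add: fmul_def atLeast0AtMost)
  also have "\<dots> = f [] * g (x # w) + (\<Sum>i\<le>length w. f (take (Suc i) (x # w)) * g (drop (Suc i) (x # w)))"
    by (subst sum.atMost_Suc_shift) simp
  also have "\<dots> = f [] * g (x # w) + fmul (\<lambda>v. f (x # v)) g w"
    by (simp add: fmul_def atLeast0AtMost)
  finally show ?thesis .
qed

lemma fmul_fadd_left: "fmul (fadd f g) h = fadd (fmul f h) (fmul g h)"
  by (rule ext) (simp add: fmul_def fadd_def sum.distrib distrib_right)

lemma fmul_fadd_right: "fmul h (fadd f g) = fadd (fmul h f) (fmul h g)"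
  by (rule ext) (simp add: fmul_def fadd_def sum.distrib distrib_left)

lemma fmul_fsc_left: "fmul (fsc c f) g = fsc c (fmul f g)"
  by (rule ext) (simp add: fmul_def fsc_def sum_distrib_left mult.assoc)

lemma fmul_fsc_right: "fmul f (fsc c g) = fsc c (fmul f g)"
  by (rule ext) (simp add: fmul_def fsc_def sum_distrib_left mult.left_commute)

lemma fmul_assoc_at: "fmul (fmul f g) h w = fmul f (fmul g h) w"
proof (induction w arbitrary: f g h)
  case Nil
  then show ?case by (simp add: fmul_Nil mult.assoc)
next
  case (Cons x w)
  have shift: "(\<lambda>v. fmul f g (x # v)) = fadd (fsc (f []) (\<lambda>v. g (x # v))) (fmul (\<lambda>v. f (x # v)) g)"
    by (rule ext) (simp add: fmul_Cons fadd_def fsc_def)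
  have "fmul (fmul f g) h (x # w) = fmul f g [] * h (x # w) + fmul (\<lambda>v. fmul f g (x # v)) h w"
    by (rule fmul_Cons)
  also have "\<dots> = f [] * g [] * h (x # w)
      + (f [] * fmul (\<lambda>v. g (x # v)) h w + fmul (fmul (\<lambda>v. f (x # v)) g) h w)"
    unfolding shift fmul_fadd_left fmul_fsc_left by (simp add: fadd_def fsc_def fmul_Nil)
  also have "\<dots> = f [] * (g [] * h (x # w) + fmul (\<lambda>v. g (x # v)) h w)
      + fmul (\<lambda>v. f (x # v)) (fmul g h) w"
    using Cons.IH by (simp add: algebra_simps)
  also have "\<dots> = fmul f (fmul g h) (x # w)"
    by (simp add: fmul_Cons)
  finally show ?case .
qed

lemma fmul_assoc: "fmul (fmul f g) h = fmul f (fmul g h)"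
  by (rule ext) (rule fmul_assoc_at)

lemma fmul_fone_left: "fmul fone g = g"
proof (rule ext)
  fix w show "fmul fone g w = g w"
  proof (cases w)
    case Nil
    then show ?thesis by (simp add: fmul_Nil fone_def)
  next
    case (Cons x v)
    have "fmul (\<lambda>u. fone (x # u)) g v = 0" by (simp add: fmul_def fone_def)
    then show ?thesis using Cons by (simp add: fmul_Cons fone_def)
  qed
qed

lemma fmul_fone_right: "fmul g fone = g"
proof (rule ext)
  fix w show "fmul g fone w = g w"
    by (induction w arbitrary: g) (simp_all add: fmul_Nil fmul_Cons fone_def)
qed

lemma fadd_assoc: "fadd (fadd a b) c = fadd a (fadd b c)"
  by (rule ext) (simp add: fadd_def add.assoc)

lemma fadd_comm: "fadd a b = fadd b a"
  by (rule ext) (simp add: fadd_def add.commute)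

lemma fadd_fzero: "fadd fzero a = a"
  by (rule ext) (simp add: fadd_def fzero_def)

lemma fa_carrier_fadd: "f \<in> fa_carrier \<Longrightarrow> g \<in> fa_carrier \<Longrightarrow> fadd f g \<in> fa_carrier"
proof -
  assume "f \<in> fa_carrier" "g \<in> fa_carrier"
  then have "finite ({w. f w \<noteq> 0} \<union> {w. g w \<noteq> 0})" by (simp add: fa_carrier_def)
  moreover have "{w. fadd f g w \<noteq> 0} \<subseteq> {w. f w \<noteq> 0} \<union> {w. g w \<noteq> 0}" by (auto simp: fadd_def)
  ultimately show ?thesis unfolding fa_carrier_def by (auto elim: finite_subset)
qed

lemma fa_carrier_fsc: "f \<in> fa_carrier \<Longrightarrow> fsc c f \<in> fa_carrier"
  unfolding fa_carrier_def fsc_def by (auto elim: rev_finite_subset)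

lemma fa_carrier_fzero: "fzero \<in> fa_carrier"
  by (simp add: fa_carrier_def fzero_def)

lemma fa_carrier_fone: "(fone :: 'l list \<Rightarrow> 'k::field) \<in> fa_carrier"
proof -
  have "{w. (fone :: 'l list \<Rightarrow> 'k) w \<noteq> 0} \<subseteq> {[]}" by (auto simp: fone_def)
  then show ?thesis unfolding fa_carrier_def by (auto elim: finite_subset)
qed

lemma fa_carrier_fgen: "(fgen a :: 'l list \<Rightarrow> 'k::field) \<in> fa_carrier"
proof -
  have "{w. (fgen a :: 'l list \<Rightarrow> 'k) w \<noteq> 0} \<subseteq> {[a]}" by (auto simp: fgen_def)
  then show ?thesis unfolding fa_carrier_def by (auto elim: finite_subset)
qed

text \<open>The support of a product lies in the concatenations of the supports.\<close>
lemma fa_carrier_fmul: "f \<in> fa_carrier \<Longrightarrow> g \<in> fa_carrier \<Longrightarrow> fmul f g \<in> fa_carrier"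
proof -
  assume f: "f \<in> fa_carrier" and g: "g \<in> fa_carrier"
  let ?S = "(\<lambda>(a, b). a @ b) ` ({w. f w \<noteq> 0} \<times> {w. g w \<noteq> 0})"
  have "{w. fmul f g w \<noteq> 0} \<subseteq> ?S"
  proof
    fix w assume "w \<in> {w. fmul f g w \<noteq> 0}"
    then have "(\<Sum>i\<in>{0..length w}. f (take i w) * g (drop i w)) \<noteq> 0" by (simp add: fmul_def)
    then obtain i where "f (take i w) * g (drop i w) \<noteq> 0" by (meson sum.neutral)
    then have "(take i w, drop i w) \<in> {w. f w \<noteq> 0} \<times> {w. g w \<noteq> 0}" by auto
    then show "w \<in> ?S" by (metis (no_types, lifting) append_take_drop_id case_prod_conv image_eqI)
  qed
  moreover have "finite ?S" using f g by (simp add: fa_carrier_def)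
  ultimately show ?thesis unfolding fa_carrier_def by (auto elim: finite_subset)
qed

lemmas fa_closed = fa_carrier_fadd fa_carrier_fsc fa_carrier_fzero fa_carrier_fone fa_carrier_fgen
  fa_carrier_fmul

section \<open>The universal enveloping algebra \<open>U(L)\<close> as a ring\<close>

context
  fixes sm :: "'k::field \<Rightarrow> 'l::ab_group_add \<Rightarrow> 'l" and br :: "'l \<Rightarrow> 'l \<Rightarrow> 'l"
begin

lemma fa_ideal_zero: "fzero \<in> fa_ideal sm br"
  and fa_ideal_add: "f \<in> fa_ideal sm br \<Longrightarrow> g \<in> fa_ideal sm br \<Longrightarrow> fadd f g \<in> fa_ideal sm br"
  and fa_ideal_mult_right: "f \<in> fa_ideal sm br \<Longrightarrow> g \<in> fa_carrier \<Longrightarrow> fmul f g \<in> fa_ideal sm br"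
  and fa_ideal_mult_left: "f \<in> fa_ideal sm br \<Longrightarrow> g \<in> fa_carrier \<Longrightarrow> fmul g f \<in> fa_ideal sm br"
  and fa_ideal_rels: "fa_rels sm br \<subseteq> fa_ideal sm br"
  unfolding fa_ideal_def by blast+

lemma fa_ideal_sc: "f \<in> fa_ideal sm br \<Longrightarrow> fsc c f \<in> fa_ideal sm br"
  using fa_ideal_mult_right[of f "fsc c fone"] by (simp add: fa_closed fmul_fsc_right fmul_fone_right)

definition ul_equiv :: "('l list \<Rightarrow> 'k) \<Rightarrow> ('l list \<Rightarrow> 'k) \<Rightarrow> bool" where
  "ul_equiv f g \<longleftrightarrow> fadd f (fsc (-1) g) \<in> fa_ideal sm br"

text \<open>Every congruence property below follows from one ideal-closure property and an
  identity of functions on words.\<close>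
lemma ul_equiv_by_identity:
  assumes "x \<in> fa_ideal sm br" and "x = fadd f (fsc (-1) g)"
  shows "ul_equiv f g"
  using assms by (simp add: ul_equiv_def)

lemma ul_equiv_refl: "ul_equiv f f"
  by (rule ul_equiv_by_identity[OF fa_ideal_zero]) (simp add: fun_eq_iff fadd_def fsc_def fzero_def)

lemma ul_equiv_sym:
  assumes "ul_equiv f g" shows "ul_equiv g f"
  by (rule ul_equiv_by_identity[OF fa_ideal_sc[OF assms[unfolded ul_equiv_def], of "-1"]])
     (simp add: fun_eq_iff fadd_def fsc_def)

lemma ul_equiv_trans:
  assumes "ul_equiv f g" "ul_equiv g h" shows "ul_equiv f h"
  by (rule ul_equiv_by_identity[OF fa_ideal_add[OF assms[unfolded ul_equiv_def]]])
     (simp add: fun_eq_iff fadd_def fsc_def)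

lemma ul_equiv_fadd:
  assumes "ul_equiv f f'" "ul_equiv g g'" shows "ul_equiv (fadd f g) (fadd f' g')"
  by (rule ul_equiv_by_identity[OF fa_ideal_add[OF assms[unfolded ul_equiv_def]]])
     (simp add: fun_eq_iff fadd_def fsc_def)

lemma ul_equiv_fsc:
  assumes "ul_equiv f f'" shows "ul_equiv (fsc c f) (fsc c f')"
  by (rule ul_equiv_by_identity[OF fa_ideal_sc[OF assms[unfolded ul_equiv_def], of c]])
     (simp add: fun_eq_iff fadd_def fsc_def algebra_simps)

text \<open>Compatibility with products: \<open>fg - f'g' = (f - f')g + f'(g - g')\<close>.\<close>
lemma ul_equiv_fmul:
  assumes "ul_equiv f f'" "ul_equiv g g'" "g \<in> fa_carrier" "f' \<in> fa_carrier"
  shows "ul_equiv (fmul f g) (fmul f' g')"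
proof (rule ul_equiv_by_identity)
  show "fadd (fmul (fadd f (fsc (-1) f')) g) (fmul f' (fadd g (fsc (-1) g'))) \<in> fa_ideal sm br"
    using assms unfolding ul_equiv_def by (simp add: fa_ideal_add fa_ideal_mult_right fa_ideal_mult_left)
  show "fadd (fmul (fadd f (fsc (-1) f')) g) (fmul f' (fadd g (fsc (-1) g')))
      = fadd (fmul f g) (fsc (-1) (fmul f' g'))"
    unfolding fmul_fadd_left fmul_fadd_right fmul_fsc_left fmul_fsc_right
    by (simp add: fun_eq_iff fadd_def fsc_def)
qed

lemma ul_cls_eq_iff:
  assumes "f \<in> fa_carrier" "g \<in> fa_carrier"
  shows "ul_cls sm br f = ul_cls sm br g \<longleftrightarrow> ul_equiv f g"
proof
  assume "ul_cls sm br f = ul_cls sm br g"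
  moreover have "f \<in> ul_cls sm br f"
    using assms ul_equiv_refl by (simp add: ul_cls_def ul_equiv_def)
  ultimately show "ul_equiv f g" by (simp add: ul_cls_def ul_equiv_def)
next
  assume "ul_equiv f g"
  then show "ul_cls sm br f = ul_cls sm br g"
    unfolding ul_cls_def ul_equiv_def[symmetric] using ul_equiv_trans ul_equiv_sym by blast
qed

lemma ul_rep_cls:
  assumes "f \<in> fa_carrier"
  shows "ul_rep (ul_cls sm br f) \<in> fa_carrier" "ul_equiv (ul_rep (ul_cls sm br f)) f"
proof -
  have "f \<in> ul_cls sm br f"
    using assms ul_equiv_refl by (simp add: ul_cls_def ul_equiv_def)
  then have "ul_rep (ul_cls sm br f) \<in> ul_cls sm br f"
    unfolding ul_rep_def by (rule someI[where x = f])
  then show "ul_rep (ul_cls sm br f) \<in> fa_carrier" "ul_equiv (ul_rep (ul_cls sm br f)) f"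
    by (simp_all add: ul_cls_def ul_equiv_def)
qed

lemma UL_carrier: "carrier (UL_ring sm br) = ul_cls sm br ` fa_carrier"
  by (auto simp: UL_ring_def)

lemma ul_cls_in: "f \<in> fa_carrier \<Longrightarrow> ul_cls sm br f \<in> carrier (UL_ring sm br)"
  by (simp add: UL_carrier)

lemma ul_cls_add:
  "f \<in> fa_carrier \<Longrightarrow> g \<in> fa_carrier \<Longrightarrow>
   ul_cls sm br f \<oplus>\<^bsub>UL_ring sm br\<^esub> ul_cls sm br g = ul_cls sm br (fadd f g)"
  by (simp add: UL_ring_def ul_cls_eq_iff fa_closed ul_rep_cls ul_equiv_fadd)

lemma ul_cls_mult:
  "f \<in> fa_carrier \<Longrightarrow> g \<in> fa_carrier \<Longrightarrow>
   ul_cls sm br f \<otimes>\<^bsub>UL_ring sm br\<^esub> ul_cls sm br g = ul_cls sm br (fmul f g)"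
  by (simp add: UL_ring_def ul_cls_eq_iff fa_closed ul_rep_cls ul_equiv_fmul)

lemma ul_cls_sc: "f \<in> fa_carrier \<Longrightarrow> ul_sc sm br c (ul_cls sm br f) = ul_cls sm br (fsc c f)"
  by (simp add: ul_sc_def ul_cls_eq_iff fa_closed ul_rep_cls ul_equiv_fsc)

lemma UL_one: "\<one>\<^bsub>UL_ring sm br\<^esub> = ul_cls sm br fone"
  and UL_zero: "\<zero>\<^bsub>UL_ring sm br\<^esub> = ul_cls sm br fzero"
  by (simp_all add: UL_ring_def)

lemmas ul_cls_simps = ul_cls_add ul_cls_mult ul_cls_in UL_one UL_zero

lemma UL_abelian_group: "abelian_group (UL_ring sm br)"
proof (rule abelian_groupI)
  fix x y z assume "x \<in> carrier (UL_ring sm br)" "y \<in> carrier (UL_ring sm br)"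
    "z \<in> carrier (UL_ring sm br)"
  then obtain a b c where abc: "a \<in> fa_carrier" "b \<in> fa_carrier" "c \<in> fa_carrier"
    and xyz: "x = ul_cls sm br a" "y = ul_cls sm br b" "z = ul_cls sm br c"
    by (auto simp: UL_carrier)
  show "x \<oplus>\<^bsub>UL_ring sm br\<^esub> y \<in> carrier (UL_ring sm br)"
    and "x \<oplus>\<^bsub>UL_ring sm br\<^esub> y \<oplus>\<^bsub>UL_ring sm br\<^esub> z = x \<oplus>\<^bsub>UL_ring sm br\<^esub> (y \<oplus>\<^bsub>UL_ring sm br\<^esub> z)"
    and "x \<oplus>\<^bsub>UL_ring sm br\<^esub> y = y \<oplus>\<^bsub>UL_ring sm br\<^esub> x"
    and "\<zero>\<^bsub>UL_ring sm br\<^esub> \<oplus>\<^bsub>UL_ring sm br\<^esub> x = x"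
    using abc by (simp_all add: xyz ul_cls_simps fa_closed fadd_assoc fadd_comm[of a] fadd_fzero)
  have "fadd (fsc (-1) a) a = fzero" by (simp add: fun_eq_iff fadd_def fsc_def fzero_def)
  then have "ul_cls sm br (fsc (-1) a) \<oplus>\<^bsub>UL_ring sm br\<^esub> x = \<zero>\<^bsub>UL_ring sm br\<^esub>"
    using abc by (simp add: xyz ul_cls_simps fa_closed)
  moreover have "ul_cls sm br (fsc (-1) a) \<in> carrier (UL_ring sm br)"
    using abc by (simp add: ul_cls_in fa_closed)
  ultimately show "\<exists>y\<in>carrier (UL_ring sm br). y \<oplus>\<^bsub>UL_ring sm br\<^esub> x = \<zero>\<^bsub>UL_ring sm br\<^esub>" by blast
qed (simp add: UL_zero ul_cls_in fa_closed)

lemma UL_ring: "ring (UL_ring sm br)"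
proof (rule ringI[OF UL_abelian_group])
  show "monoid (UL_ring sm br)"
    by (rule monoidI) (auto simp: UL_carrier ul_cls_simps fa_closed fmul_assoc fmul_fone_left fmul_fone_right)
qed (auto simp: UL_carrier ul_cls_simps fa_closed fmul_fadd_left fmul_fadd_right)

end

section \<open>The subalgebra \<open>U(N)\<close>, inner derivations and the augmentation\<close>

lemma (in ring) commutator_add:
  assumes "x \<in> carrier R" "y \<in> carrier R" "g \<in> carrier R"
  shows "(x \<oplus> y) \<otimes> g \<ominus> g \<otimes> (x \<oplus> y) = (x \<otimes> g \<ominus> g \<otimes> x) \<oplus> (y \<otimes> g \<ominus> g \<otimes> y)"
  using assms by (simp add: ring_simprules)

lemma (in ring) commutator_mult:
  assumes "x \<in> carrier R" "y \<in> carrier R" "g \<in> carrier R"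
  shows "(x \<otimes> y) \<otimes> g \<ominus> g \<otimes> (x \<otimes> y) = (x \<otimes> g \<ominus> g \<otimes> x) \<otimes> y \<oplus> x \<otimes> (y \<otimes> g \<ominus> g \<otimes> y)"
proof -
  let ?a = "x \<otimes> y \<otimes> g" and ?b = "g \<otimes> x \<otimes> y" and ?c = "x \<otimes> g \<otimes> y"
  have abc: "?a \<in> carrier R" "?b \<in> carrier R" "?c \<in> carrier R" using assms by simp_all
  have "(x \<otimes> g \<ominus> g \<otimes> x) \<otimes> y \<oplus> x \<otimes> (y \<otimes> g \<ominus> g \<otimes> y) = (?c \<ominus> ?b) \<oplus> (?a \<ominus> ?c)"
    using assms by (simp add: minus_eq l_distr r_distr l_minus r_minus m_assoc)
  also have "\<dots> = (?a \<ominus> ?b) \<oplus> (?c \<ominus> ?c)"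
    using abc by (simp add: minus_eq a_ac)
  also have "\<dots> = ?a \<ominus> ?b"
    using abc by (simp add: r_neg)
  finally show ?thesis using assms by (simp add: m_assoc)
qed

lemma K_ring: "ring (K_ring :: 'k::field ring)"
proof (rule ringI)
  show "abelian_group (K_ring :: 'k ring)"
    by (rule abelian_groupI) (auto simp: K_ring_def intro: exI[of _ "-x" for x])
  show "monoid (K_ring :: 'k ring)"
    by (rule monoidI) (auto simp: K_ring_def)
qed (auto simp: K_ring_def algebra_simps)

lemma K_simps [simp]:
  "carrier K_ring = UNIV" "mult K_ring = (*)" "add K_ring = (+)" "one K_ring = 1" "zero K_ring = 0"
  by (simp_all add: K_ring_def)

context
  fixes sm :: "'k::field \<Rightarrow> 'l::ab_group_add \<Rightarrow> 'l" and br :: "'l \<Rightarrow> 'l \<Rightarrow> 'l"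
begin

interpretation U: ring "UL_ring sm br" by (rule UL_ring)

lemma ul_gen_in: "ul_gen sm br a \<in> carrier (UL_ring sm br)"
  by (simp add: ul_gen_def ul_cls_in fa_closed)

lemma ul_gen_commute:
  "ul_gen sm br a \<otimes>\<^bsub>UL_ring sm br\<^esub> ul_gen sm br b
   = ul_gen sm br b \<otimes>\<^bsub>UL_ring sm br\<^esub> ul_gen sm br a \<oplus>\<^bsub>UL_ring sm br\<^esub> ul_gen sm br (br a b)"
proof -
  have "fadd (fmul (fgen a) (fgen b)) (fsc (-1) (fadd (fmul (fgen b) (fgen a)) (fgen (br a b))))
      \<in> fa_rels sm br"
    unfolding fa_rels_def by blast
  then have "ul_equiv sm br (fmul (fgen a) (fgen b)) (fadd (fmul (fgen b) (fgen a)) (fgen (br a b)))"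
    unfolding ul_equiv_def using fa_ideal_rels by blast
  then show ?thesis by (simp add: ul_gen_def ul_cls_mult ul_cls_add ul_cls_eq_iff fa_closed)
qed

lemma ul_der_gen: "ul_der sm br s (ul_gen sm br n) = ul_gen sm br (br n s)"
  unfolding ul_der_def ul_gen_commute[of n s] by (simp add: U.ring_simprules ul_gen_in)

text \<open>Scalars \<open>c\<cdot>1\<close> are central, so inner derivations kill them.\<close>

lemma ul_scalar_cls: "ul_sc sm br c \<one>\<^bsub>UL_ring sm br\<^esub> = ul_cls sm br (fsc c fone)"
  by (simp add: UL_one ul_cls_sc fa_closed)

lemma ul_scalar_in: "ul_sc sm br c \<one>\<^bsub>UL_ring sm br\<^esub> \<in> carrier (UL_ring sm br)"
  by (simp add: ul_scalar_cls ul_cls_in fa_closed)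

lemma ul_scalar_central:
  "X \<in> carrier (UL_ring sm br) \<Longrightarrow>
   ul_sc sm br c \<one>\<^bsub>UL_ring sm br\<^esub> \<otimes>\<^bsub>UL_ring sm br\<^esub> X = X \<otimes>\<^bsub>UL_ring sm br\<^esub> ul_sc sm br c \<one>\<^bsub>UL_ring sm br\<^esub>"
  by (auto simp: UL_carrier ul_scalar_cls ul_cls_mult fa_closed fmul_fsc_left fmul_fsc_right
      fmul_fone_left fmul_fone_right)

lemma ul_der_scalar: "ul_der sm br s (ul_sc sm br c \<one>\<^bsub>UL_ring sm br\<^esub>) = \<zero>\<^bsub>UL_ring sm br\<^esub>"
  unfolding ul_der_def ul_scalar_central[OF ul_gen_in]
  by (simp add: U.r_neg ul_scalar_in ul_gen_in U.minus_eq)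

lemma ul_der_zero: "ul_der sm br s \<zero>\<^bsub>UL_ring sm br\<^esub> = \<zero>\<^bsub>UL_ring sm br\<^esub>"
  unfolding ul_der_def by (simp add: ul_gen_in)

text \<open>The scalars \<open>1\<close> and \<open>-1\<close>: they show that \<open>U(N)\<close> contains \<open>1\<close> and is closed under
  negation.\<close>
lemma ul_scalar_one: "ul_sc sm br 1 \<one>\<^bsub>UL_ring sm br\<^esub> = \<one>\<^bsub>UL_ring sm br\<^esub>"
proof -
  have "fsc 1 fone = (fone :: 'l list \<Rightarrow> 'k)" by (simp add: fun_eq_iff fsc_def)
  then show ?thesis using ul_scalar_cls[of 1] by (simp add: UL_one)
qed

lemma ul_scalar_minus_one: "ul_sc sm br (-1) \<one>\<^bsub>UL_ring sm br\<^esub> = \<ominus>\<^bsub>UL_ring sm br\<^esub> \<one>\<^bsub>UL_ring sm br\<^esub>"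
proof -
  have "fadd (fsc (-1) fone) fone = (fzero :: 'l list \<Rightarrow> 'k)"
    by (simp add: fun_eq_iff fsc_def fadd_def fzero_def)
  then have "ul_sc sm br (-1) \<one>\<^bsub>UL_ring sm br\<^esub> \<oplus>\<^bsub>UL_ring sm br\<^esub> \<one>\<^bsub>UL_ring sm br\<^esub> = \<zero>\<^bsub>UL_ring sm br\<^esub>"
    using ul_scalar_cls[of "-1"] by (simp add: UL_one UL_zero ul_cls_add fa_closed)
  then show ?thesis by (intro U.minus_equality[symmetric]) (simp_all add: ul_scalar_in)
qed

lemma un_set_sub: "un_set sm br N \<subseteq> carrier (UL_ring sm br)"
proof
  fix X assume "X \<in> un_set sm br N"
  then show "X \<in> carrier (UL_ring sm br)"
    by induction (auto simp: ul_scalar_in ul_gen_in)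
qed

lemma un_set_subring: "subring (un_set sm br N) (UL_ring sm br)"
proof (rule U.subringI)
  show "un_set sm br N \<subseteq> carrier (UL_ring sm br)" by (rule un_set_sub)
  show "\<one>\<^bsub>UL_ring sm br\<^esub> \<in> un_set sm br N"
    using un_set.scal[of sm br 1 N] by (simp add: ul_scalar_one)
  fix X assume X: "X \<in> un_set sm br N"
  then have "ul_sc sm br (-1) \<one>\<^bsub>UL_ring sm br\<^esub> \<otimes>\<^bsub>UL_ring sm br\<^esub> X \<in> un_set sm br N"
    by (intro un_set.mult un_set.scal)
  then show "\<ominus>\<^bsub>UL_ring sm br\<^esub> X \<in> un_set sm br N"
    using X un_set_sub[of N] U.l_minus[of "\<one>\<^bsub>UL_ring sm br\<^esub>" X] by (auto simp: ul_scalar_minus_one)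
qed (auto intro: un_set.add un_set.mult)

lemma UN_ring: "ring (UN_ring sm br N)"
  unfolding UN_ring_def by (rule U.subring_is_ring[OF un_set_subring])

lemma UN_simps [simp]:
  "carrier (UN_ring sm br N) = un_set sm br N" "mult (UN_ring sm br N) = mult (UL_ring sm br)"
  "add (UN_ring sm br N) = add (UL_ring sm br)" "one (UN_ring sm br N) = one (UL_ring sm br)"
  "zero (UN_ring sm br N) = zero (UL_ring sm br)"
  by (simp_all add: UN_ring_def)

lemma ul_der_un_set:
  assumes N_stable: "\<And>n. n \<in> N \<Longrightarrow> br n s \<in> N" and X: "X \<in> un_set sm br N"
  shows "ul_der sm br s X \<in> un_set sm br N"
  using X
proof induction
  case (scal c)
  then show ?case using subringE(2)[OF un_set_subring] by (simp add: ul_der_scalar)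
next
  case (gen n)
  then show ?case by (simp add: ul_der_gen N_stable un_set.gen)
next
  case (add X Y)
  then have "X \<in> carrier (UL_ring sm br)" "Y \<in> carrier (UL_ring sm br)" using un_set_sub by auto
  with add show ?case unfolding ul_der_def by (simp add: U.commutator_add ul_gen_in un_set.add)
next
  case (mult X Y)
  then have "X \<in> carrier (UL_ring sm br)" "Y \<in> carrier (UL_ring sm br)" using un_set_sub by auto
  with mult show ?case
    unfolding ul_der_def by (simp add: U.commutator_mult ul_gen_in un_set.add un_set.mult)
qed

text \<open>This is the base case of the whole tower.\<close>
lemma augmentation_kills_der:
  assumes N_stable: "\<And>n. n \<in> N \<Longrightarrow> br n s \<in> N" and X: "X \<in> un_set sm br N"
    and \<epsilon>_hom: "\<epsilon> \<in> ring_hom (UN_ring sm br N) K_ring" and \<epsilon>_N: "\<forall>n\<in>N. \<epsilon> (ul_gen sm br n) = 0"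
  shows "\<epsilon> (ul_der sm br s X) = 0"
  using X
proof induction
  case (scal c)
  have "\<epsilon> \<zero>\<^bsub>UN_ring sm br N\<^esub> = \<zero>\<^bsub>K_ring\<^esub>"
    by (rule ring_hom_zero[OF \<epsilon>_hom UN_ring K_ring])
  then show ?case by (simp add: ul_der_scalar)
next
  case (gen n)
  then show ?case by (simp add: ul_der_gen N_stable \<epsilon>_N)
next
  case (add X Y)
  note der_in = ul_der_un_set[OF N_stable add(1)] ul_der_un_set[OF N_stable add(2)]
  have "X \<in> carrier (UL_ring sm br)" "Y \<in> carrier (UL_ring sm br)" using add un_set_sub by auto
  then have "ul_der sm br s (X \<oplus>\<^bsub>UL_ring sm br\<^esub> Y)
      = ul_der sm br s X \<oplus>\<^bsub>UN_ring sm br N\<^esub> ul_der sm br s Y"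
    unfolding ul_der_def by (simp add: U.commutator_add ul_gen_in)
  then show ?case using add der_in ring_hom_add[OF \<epsilon>_hom] by simp
next
  case (mult X Y)
  note der_in = ul_der_un_set[OF N_stable mult(1)] ul_der_un_set[OF N_stable mult(2)]
  have "X \<in> carrier (UL_ring sm br)" "Y \<in> carrier (UL_ring sm br)" using mult un_set_sub by auto
  then have "ul_der sm br s (X \<otimes>\<^bsub>UL_ring sm br\<^esub> Y)
      = ul_der sm br s X \<otimes>\<^bsub>UN_ring sm br N\<^esub> Y \<oplus>\<^bsub>UN_ring sm br N\<^esub> X \<otimes>\<^bsub>UN_ring sm br N\<^esub> ul_der sm br s Y"
    unfolding ul_der_def by (simp add: U.commutator_mult ul_gen_in)
  then show ?case
    using mult der_in ring_hom_add[OF \<epsilon>_hom] ring_hom_mult[OF \<epsilon>_hom] by (simp add: un_set.mult)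
qed

end

section \<open>Laurent series over ring-like coefficient structures\<close>

text \<open>The Laurent series structures \<open>LS R d\<close> are not shown to be associative rings here, and
  need not be: a ring homomorphism in the sense of HOL-Algebra only has to respect the
  operations.  All we use of the coefficients is the following "ring-like" structure, which
  every ring has and which passes from \<open>R\<close> to \<open>LS R d\<close>.\<close>
definition ring_like :: "('a, 'm) ring_scheme \<Rightarrow> bool" where
  "ring_like R \<longleftrightarrow> abelian_group R
     \<and> (\<forall>x\<in>carrier R. \<forall>y\<in>carrier R. x \<otimes>\<^bsub>R\<^esub> y \<in> carrier R) \<and> \<one>\<^bsub>R\<^esub> \<in> carrier R
     \<and> (\<forall>x\<in>carrier R. x \<otimes>\<^bsub>R\<^esub> \<zero>\<^bsub>R\<^esub> = \<zero>\<^bsub>R\<^esub> \<and> \<zero>\<^bsub>R\<^esub> \<otimes>\<^bsub>R\<^esub> x = \<zero>\<^bsub>R\<^esub>)"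

text \<open>Likewise, of the twisting derivations only this is used: they map the carrier into
  itself and fix zero.\<close>
definition zero_fixing :: "('a, 'm) ring_scheme \<Rightarrow> ('a \<Rightarrow> 'a) \<Rightarrow> bool" where
  "zero_fixing R d \<longleftrightarrow> (\<forall>x\<in>carrier R. d x \<in> carrier R) \<and> d \<zero>\<^bsub>R\<^esub> = \<zero>\<^bsub>R\<^esub>"

definition ls_from :: "('a, 'm) ring_scheme \<Rightarrow> int \<Rightarrow> (int \<Rightarrow> 'a) set" where
  "ls_from R a = {f. (\<forall>i. f i \<in> carrier R) \<and> (\<forall>n<a. f n = \<zero>\<^bsub>R\<^esub>)}"

lemma LS_simps [simp]:
  "carrier (LS R d) = ls_carrier R" "mult (LS R d) = ls_mult R d" "one (LS R d) = ls_one R"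
  "zero (LS R d) = (\<lambda>i. \<zero>\<^bsub>R\<^esub>)" "add (LS R d) = (\<lambda>f g i. f i \<oplus>\<^bsub>R\<^esub> g i)"
  by (simp_all add: LS_def)

lemma ls_carrier_iff: "f \<in> ls_carrier R \<longleftrightarrow> (\<exists>a. f \<in> ls_from R a)"
  by (auto simp: ls_carrier_def ls_from_def)

lemma ls_fromD:
  "f \<in> ls_from R a \<Longrightarrow> f i \<in> carrier R" "f \<in> ls_from R a \<Longrightarrow> n < a \<Longrightarrow> f n = \<zero>\<^bsub>R\<^esub>"
  by (simp_all add: ls_from_def)

lemma ls_from_carrier: "f \<in> ls_from R a \<Longrightarrow> f \<in> ls_carrier R"
  by (auto simp: ls_carrier_iff)

lemma ring_like_ring: "ring R \<Longrightarrow> ring_like R"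
  by (simp add: ring_like_def ring.is_abelian_group ring.ring_simprules)

lemma ring_likeD:
  assumes "ring_like R"
  shows "abelian_group R" "\<zero>\<^bsub>R\<^esub> \<in> carrier R" "x \<in> carrier R \<Longrightarrow> y \<in> carrier R \<Longrightarrow> x \<otimes>\<^bsub>R\<^esub> y \<in> carrier R"
    "\<one>\<^bsub>R\<^esub> \<in> carrier R" "x \<in> carrier R \<Longrightarrow> x \<otimes>\<^bsub>R\<^esub> \<zero>\<^bsub>R\<^esub> = \<zero>\<^bsub>R\<^esub>"
    "x \<in> carrier R \<Longrightarrow> \<zero>\<^bsub>R\<^esub> \<otimes>\<^bsub>R\<^esub> x = \<zero>\<^bsub>R\<^esub>"
  using assms by (simp_all add: ring_like_def abelian_group.axioms(1) abelian_monoid.zero_closed)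

lemma zero_fixing_iterate:
  assumes "zero_fixing R d"
  shows "x \<in> carrier R \<Longrightarrow> (d ^^ k) x \<in> carrier R" "(d ^^ k) \<zero>\<^bsub>R\<^esub> = \<zero>\<^bsub>R\<^esub>"
  using assms by (induction k) (auto simp: zero_fixing_def)

text \<open>The \<open>n\<close>-th coefficient of \<open>f g\<close> is a sum over the pairs \<open>(j, k)\<close> with \<open>f\<^sub>n\<^sub>-\<^sub>j\<^sub>-\<^sub>k \<noteq> 0\<close>
  and \<open>g\<^sub>j \<noteq> 0\<close>; for series of order \<open>\<ge> a\<close> and \<open>\<ge> b\<close> these form a finite box, which is
  empty when \<open>n < a + b\<close>.\<close>
lemma ls_mult_support_sub:
  assumes "f \<in> ls_from R a" "g \<in> ls_from R b"
  shows "{(j :: int, k :: nat). f (n - j - int k) \<noteq> \<zero>\<^bsub>R\<^esub> \<and> g j \<noteq> \<zero>\<^bsub>R\<^esub>}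
    \<subseteq> {b..n - a} \<times> {..nat (n - a - b)}"
proof (clarsimp)
  fix j k assume "f (n - j - int k) \<noteq> \<zero>\<^bsub>R\<^esub>" "g j \<noteq> \<zero>\<^bsub>R\<^esub>"
  then have "b \<le> j" "a \<le> n - j - int k" using assms ls_fromD(2) by (meson not_less)+
  then show "b \<le> j \<and> j \<le> n - a \<and> k \<le> nat (n - a - b)" by linarith
qed

lemma ls_mult_support_finite:
  "f \<in> ls_from R a \<Longrightarrow> g \<in> ls_from R b \<Longrightarrow>
   finite {(j :: int, k :: nat). f (n - j - int k) \<noteq> \<zero>\<^bsub>R\<^esub> \<and> g j \<noteq> \<zero>\<^bsub>R\<^esub>}"
  by (rule finite_subset[OF ls_mult_support_sub]) auto

lemma ls_mult_in_from:
  assumes R: "ring_like R" and d: "zero_fixing R d"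
    and f: "f \<in> ls_from R a" and g: "g \<in> ls_from R b" and c: "c \<le> a + b"
  shows "ls_mult R d f g \<in> ls_from R c"
proof -
  interpret R: abelian_group R using ring_likeD(1)[OF R] .
  have "ls_mult R d f g n \<in> carrier R" for n
    unfolding ls_mult_def using ls_fromD(1)[OF f] ls_fromD(1)[OF g]
    by (intro R.finsum_closed) (auto intro!: R.add.int_pow_closed ring_likeD(3)[OF R] zero_fixing_iterate(1)[OF d])
  moreover have "ls_mult R d f g n = \<zero>\<^bsub>R\<^esub>" if "n < c" for n
  proof -
    have empty: "{(j :: int, k :: nat). f (n - j - int k) \<noteq> \<zero>\<^bsub>R\<^esub> \<and> g j \<noteq> \<zero>\<^bsub>R\<^esub>} = {}"
      using ls_mult_support_sub[OF f g, of n] that c by force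
    show ?thesis unfolding ls_mult_def empty by simp
  qed
  ultimately show ?thesis by (simp add: ls_from_def)
qed

lemma ls_mult_closed:
  "ring_like R \<Longrightarrow> zero_fixing R d \<Longrightarrow> f \<in> ls_carrier R \<Longrightarrow> g \<in> ls_carrier R \<Longrightarrow>
   ls_mult R d f g \<in> ls_carrier R"
  by (auto simp: ls_carrier_iff intro: ls_mult_in_from)

lemma ls_mult_zero_right: "abelian_group R \<Longrightarrow> ls_mult R d f (\<lambda>i. \<zero>\<^bsub>R\<^esub>) = (\<lambda>i. \<zero>\<^bsub>R\<^esub>)"
  and ls_mult_zero_left: "abelian_group R \<Longrightarrow> ls_mult R d (\<lambda>i. \<zero>\<^bsub>R\<^esub>) f = (\<lambda>i. \<zero>\<^bsub>R\<^esub>)"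
  by (simp_all add: ls_mult_def abelian_monoid.finsum_empty[OF abelian_group.axioms(1)])

lemma LS_abelian_group:
  assumes R: "abelian_group R"
  shows "abelian_group (LS R d)"
proof -
  interpret R: abelian_group R by fact
  show ?thesis
  proof (rule abelian_groupI)
    fix x y assume "x \<in> carrier (LS R d)" "y \<in> carrier (LS R d)"
    then obtain a b where x: "x \<in> ls_from R a" and y: "y \<in> ls_from R b"
      by (auto simp: ls_carrier_iff)
    then have "x \<oplus>\<^bsub>LS R d\<^esub> y \<in> ls_from R (min a b)"
      by (auto simp: ls_from_def)
    then show "x \<oplus>\<^bsub>LS R d\<^esub> y \<in> carrier (LS R d)" unfolding LS_simps ls_carrier_iff by blast
    show "x \<oplus>\<^bsub>LS R d\<^esub> y = y \<oplus>\<^bsub>LS R d\<^esub> x"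
      using x y by (auto simp: ls_from_def R.a_comm)
  next
    fix x y z assume "x \<in> carrier (LS R d)" "y \<in> carrier (LS R d)" "z \<in> carrier (LS R d)"
    then show "x \<oplus>\<^bsub>LS R d\<^esub> y \<oplus>\<^bsub>LS R d\<^esub> z = x \<oplus>\<^bsub>LS R d\<^esub> (y \<oplus>\<^bsub>LS R d\<^esub> z)"
      by (auto simp: ls_carrier_iff ls_from_def R.a_assoc)
  next
    fix x assume "x \<in> carrier (LS R d)"
    then obtain a where x: "x \<in> ls_from R a" by (auto simp: ls_carrier_iff)
    then show "\<zero>\<^bsub>LS R d\<^esub> \<oplus>\<^bsub>LS R d\<^esub> x = x" by (auto simp: ls_from_def)
    have "(\<lambda>i. \<ominus>\<^bsub>R\<^esub> x i) \<in> ls_from R a" "(\<lambda>i. \<ominus>\<^bsub>R\<^esub> x i) \<oplus>\<^bsub>LS R d\<^esub> x = \<zero>\<^bsub>LS R d\<^esub>"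
      using x by (auto simp: ls_from_def R.l_neg)
    then show "\<exists>y\<in>carrier (LS R d). y \<oplus>\<^bsub>LS R d\<^esub> x = \<zero>\<^bsub>LS R d\<^esub>"
      using ls_from_carrier by (metis LS_simps(1))
  qed (auto simp: ls_carrier_iff ls_from_def)
qed

lemma ls_t_in_from: "ring_like R \<Longrightarrow> ls_t R a \<in> ls_from R a"
  by (simp add: ls_from_def ls_t_def ring_likeD(2,4))

lemma ls_const_in_from: "ring_like R \<Longrightarrow> c \<in> carrier R \<Longrightarrow> ls_const R c \<in> ls_from R 0"
  by (simp add: ls_from_def ls_const_def ring_likeD(2))

lemma LS_ring_like:
  assumes R: "ring_like R" and d: "zero_fixing R d"
  shows "ring_like (LS R d)"
proof -
  have "ls_one R = ls_t R 0" by (simp add: fun_eq_iff ls_one_def ls_t_def)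
  then have "ls_one R \<in> ls_carrier R"
    using ls_t_in_from[OF R] by (auto simp: ls_carrier_iff)
  then show ?thesis
    using LS_abelian_group[OF ring_likeD(1)[OF R]] ring_likeD(1)[OF R]
    by (simp add: ring_like_def ls_mult_closed[OF R d] ls_mult_zero_left ls_mult_zero_right)
qed

lemma LS_finsum_coeff:
  assumes R: "abelian_group R" and A: "finite A" and F: "\<forall>a\<in>A. F a \<in> ls_carrier R"
  shows "finsum (LS R d) F A n = finsum R (\<lambda>a. F a n) A"
  using A F
proof (induction A rule: finite_induct)
  case empty
  interpret L: abelian_group "LS R d" by (rule LS_abelian_group[OF R])
  interpret R: abelian_group R by fact
  show ?case by simp
next
  case (insert x A)
  interpret L: abelian_group "LS R d" by (rule LS_abelian_group[OF R])
  interpret R: abelian_group R by fact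
  have "finsum (LS R d) F (insert x A) n = F x n \<oplus>\<^bsub>R\<^esub> finsum (LS R d) F A n"
    using insert by (subst L.finsum_insert) (auto simp: Pi_def)
  also have "\<dots> = finsum R (\<lambda>a. F a n) (insert x A)"
    using insert by (subst R.finsum_insert) (auto simp: Pi_def ls_carrier_iff ls_from_def)
  finally show ?case .
qed

lemma LS_finsum_in_from:
  assumes R: "ring_like R" and A: "finite A" and F: "\<forall>a\<in>A. F a \<in> ls_from R m"
  shows "finsum (LS R d) F A \<in> ls_from R m"
proof -
  interpret R: abelian_group R using ring_likeD(1)[OF R] .
  interpret L: abelian_group "LS R d" by (rule LS_abelian_group[OF ring_likeD(1)[OF R]])
  have coeff: "finsum (LS R d) F A n = finsum R (\<lambda>a. F a n) A" for n
    using LS_finsum_coeff[OF ring_likeD(1)[OF R] A] F ls_from_carrier by blast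
  have "finsum R (\<lambda>a. F a n) A \<in> carrier R" for n
    using F by (intro R.finsum_closed) (auto simp: ls_from_def)
  moreover have "finsum R (\<lambda>a. F a n) A = \<zero>\<^bsub>R\<^esub>" if "n < m" for n
  proof -
    have "finsum R (\<lambda>a. F a n) A = finsum R (\<lambda>a. \<zero>\<^bsub>R\<^esub>) A"
      using F that by (intro R.finsum_cong') (auto simp: ls_from_def)
    then show ?thesis by simp
  qed
  ultimately show ?thesis by (simp add: ls_from_def coeff)
qed

text \<open>\<open>D(t\<^sup>i)\<close> has order \<open>\<ge> i + 1\<close>: it is a sum of products of powers of \<open>t\<close> and the
  constant \<open>c\<close> (resp. \<open>-t c t\<close>) of total degree \<open>i + 1\<close>.\<close>
lemma ls_der_t_in_from:
  assumes R: "ring_like R" and d: "zero_fixing R d" and c: "c \<in> carrier R"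
  shows "ls_der_t R d c i \<in> ls_from R (i + 1)"
proof -
  interpret R: abelian_group R using ring_likeD(1)[OF R] .
  note mult = ls_mult_in_from[OF R d] and t = ls_t_in_from[OF R]
    and const = ls_const_in_from[OF R c]
  consider "0 < i" | "i < 0" | "i = 0" by linarith
  then show ?thesis
  proof cases
    case 1
    define Y where "Y = (\<lambda>j. \<ominus>\<^bsub>R\<^esub> ls_mult R d (ls_t R 1) (ls_mult R d (ls_const R c) (ls_t R 1)) j)"
    have "ls_mult R d (ls_t R 1) (ls_mult R d (ls_const R c) (ls_t R 1)) \<in> ls_from R 2"
      by (rule mult[OF t mult[OF const t order.refl]]) simp
    then have Y: "Y \<in> ls_from R 2" by (simp add: Y_def ls_from_def)
    have "ls_der_t R d c i
        = finsum (LS R d) (\<lambda>a. ls_mult R d (ls_t R a) (ls_mult R d Y (ls_t R (i - 1 - a)))) {0..i - 1}"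
      using 1 by (simp add: ls_der_t_def Y_def)
    also have "\<dots> \<in> ls_from R (i + 1)"
      by (rule LS_finsum_in_from[OF R]) (auto intro!: mult[OF t mult[OF Y t order.refl]])
    finally show ?thesis .
  next
    case 2
    have "ls_der_t R d c i = finsum (LS R d)
        (\<lambda>a. ls_mult R d (ls_t R (- a)) (ls_mult R d (ls_const R c) (ls_t R (- (- i - 1 - a))))) {0..- i - 1}"
      using 2 by (simp add: ls_der_t_def)
    also have "\<dots> \<in> ls_from R (i + 1)"
      by (rule LS_finsum_in_from[OF R]) (auto intro!: mult[OF t mult[OF const t order.refl]])
    finally show ?thesis .
  next
    case 3
    then show ?thesis by (simp add: ls_der_t_def ls_from_def)
  qed
qed

text \<open>The summand \<open>D(t\<^sup>i) f\<^sub>i\<close> of \<open>D(f)\<close>: it has order \<open>\<ge> i + 1\<close> and vanishes when \<open>f\<^sub>i = 0\<close>;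
  so only the finitely many \<open>i \<in> [a, n - 1]\<close> contribute to the \<open>n\<close>-th coefficient.\<close>
definition ls_der_term :: "('a, 'm) ring_scheme \<Rightarrow> ('a \<Rightarrow> 'a) \<Rightarrow> 'a \<Rightarrow> (int \<Rightarrow> 'a) \<Rightarrow> int \<Rightarrow> int \<Rightarrow> 'a"
  where "ls_der_term R d c f i = ls_mult R d (ls_der_t R d c i) (ls_const R (f i))"

lemma ls_der_eq_term: "ls_der R d D c f n = ls_sum R (\<lambda>i. ls_der_term R d c f i) n \<oplus>\<^bsub>R\<^esub> D (f n)"
  by (simp add: ls_der_def ls_der_term_def)

lemma ls_der_term_in_from:
  assumes R: "ring_like R" and d: "zero_fixing R d" and c: "c \<in> carrier R" and f: "f i \<in> carrier R"
  shows "ls_der_term R d c f i \<in> ls_from R (i + 1)"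
  unfolding ls_der_term_def
  by (rule ls_mult_in_from[OF R d ls_der_t_in_from[OF R d c] ls_const_in_from[OF R f]]) simp

lemma ls_der_term_support:
  assumes R: "ring_like R" and d: "zero_fixing R d" and c: "c \<in> carrier R" and f: "f \<in> ls_from R a"
  shows "{i. ls_der_term R d c f i n \<noteq> \<zero>\<^bsub>R\<^esub>} \<subseteq> {a..n - 1}"
proof
  fix i assume "i \<in> {i. ls_der_term R d c f i n \<noteq> \<zero>\<^bsub>R\<^esub>}"
  then have ne: "ls_der_term R d c f i n \<noteq> \<zero>\<^bsub>R\<^esub>" by simp
  have "f i \<noteq> \<zero>\<^bsub>R\<^esub>"
  proof
    assume "f i = \<zero>\<^bsub>R\<^esub>"
    then have "ls_der_term R d c f i = (\<lambda>j. \<zero>\<^bsub>R\<^esub>)"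
      by (simp add: ls_der_term_def ls_const_def ls_mult_zero_right[OF ring_likeD(1)[OF R]])
    then show False using ne by simp
  qed
  then have "a \<le> i" using ls_fromD(2)[OF f, of i] by (cases "i < a") auto
  moreover have "i + 1 \<le> n"
    using ne ls_fromD(2)[OF ls_der_term_in_from[OF R d c ls_fromD(1)[OF f]], of n]
    by (cases "n < i + 1") auto
  ultimately show "i \<in> {a..n - 1}" by simp
qed

lemma ls_der_in_from:
  assumes R: "ring_like R" and d: "zero_fixing R d" and D: "zero_fixing R D" and c: "c \<in> carrier R"
    and f: "f \<in> ls_from R a"
  shows "ls_der R d D c f \<in> ls_from R a"
proof -
  interpret R: abelian_group R using ring_likeD(1)[OF R] .
  have "ls_sum R (ls_der_term R d c f) n \<in> carrier R" for n
    unfolding ls_sum_def using ls_der_term_in_from[OF R d c ls_fromD(1)[OF f]]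
    by (intro R.finsum_closed) (auto simp: ls_from_def)
  moreover have "ls_sum R (ls_der_term R d c f) n = \<zero>\<^bsub>R\<^esub>" if "n < a" for n
    using ls_der_term_support[OF R d c f, of n] that unfolding ls_sum_def by force
  ultimately show ?thesis
    using f D by (simp add: ls_from_def ls_der_eq_term zero_fixing_def)
qed

lemma ls_der_zero_fixing:
  assumes R: "ring_like R" and d: "zero_fixing R d" and D: "zero_fixing R D" and c: "c \<in> carrier R"
  shows "zero_fixing (LS R d) (ls_der R d D c)"
proof -
  interpret R: abelian_group R using ring_likeD(1)[OF R] .
  have "ls_der R d D c (\<lambda>i. \<zero>\<^bsub>R\<^esub>) \<in> ls_from R (n + 1)" for n
    by (rule ls_der_in_from[OF R d D c]) (simp add: ls_from_def)
  then have "ls_der R d D c (\<lambda>i. \<zero>\<^bsub>R\<^esub>) = (\<lambda>i. \<zero>\<^bsub>R\<^esub>)"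
    by (auto simp: fun_eq_iff ls_from_def)
  moreover have "ls_der R d D c f \<in> ls_carrier R" if "f \<in> ls_carrier R" for f
    using that ls_der_in_from[OF R d D c] unfolding ls_carrier_iff by blast
  ultimately show ?thesis by (simp add: zero_fixing_def)
qed

section \<open>Coefficientwise maps of Laurent series\<close>

lemma ring_hom_abelian_group_hom:
  assumes "abelian_group R" "abelian_group S" "h \<in> ring_hom R S"
  shows "abelian_group_hom R S h"
proof (rule abelian_group_homI[OF assms(1,2)])
  have "h \<in> hom (add_monoid R) (add_monoid S)"
    using assms(3) unfolding hom_def ring_hom_def by auto
  then show "group_hom (add_monoid R) (add_monoid S) h"
    using abelian_group.a_group[OF assms(1)] abelian_group.a_group[OF assms(2)]
    by (simp add: group_hom_def group_hom_axioms_def)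
qed

lemma (in abelian_group_hom) hom_add_pow:
  "x \<in> carrier G \<Longrightarrow> h (add_pow G (m :: int) x) = add_pow H m (h x)"
  using group_hom.hom_int_pow[OF a_group_hom] by (simp add: add_pow_def)

lemma (in abelian_group_hom) hom_finsum_additive:
  assumes "finite A" "F \<in> A \<rightarrow> carrier G"
  shows "h (finsum G F A) = finsum H (\<lambda>a. h (F a)) A"
  using assms
proof (induction A rule: finite_induct)
  case (insert x A)
  then show ?case by (simp add: G.finsum_insert H.finsum_insert G.finsum_closed Pi_def)
qed simp

lemma intertwine_iterate:
  assumes "zero_fixing R d" "\<forall>x\<in>carrier R. h (d x) = d' (h x)" "x \<in> carrier R"
  shows "h ((d ^^ k) x) = (d' ^^ k) (h x)"
  using assms by (induction k) (simp_all add: zero_fixing_iterate(1))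

text \<open>The hypotheses under which \<open>ls_map h\<close> will be a homomorphism \<open>R((t;d)) \<rightarrow> S((t;d'))\<close>:
  \<open>h\<close> is a ring homomorphism between ring-like structures intertwining the twists.\<close>
definition compatible ::
    "('a \<Rightarrow> 'b) \<Rightarrow> ('a, 'm) ring_scheme \<Rightarrow> ('b, 'n) ring_scheme \<Rightarrow> ('a \<Rightarrow> 'a) \<Rightarrow> ('b \<Rightarrow> 'b) \<Rightarrow> bool"
  where "compatible h R S d d' \<longleftrightarrow> ring_like R \<and> ring_like S \<and> zero_fixing R d \<and> zero_fixing S d'
     \<and> h \<in> ring_hom R S \<and> (\<forall>x\<in>carrier R. h (d x) = d' (h x))"

context
  fixes h R S d d'
  assumes comp: "compatible h R S d d'"
begin

lemma compat_R: "ring_like R" and compat_S: "ring_like S"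
  and compat_d: "zero_fixing R d" and compat_d': "zero_fixing S d'"
  and compat_hom: "h \<in> ring_hom R S" and compat_intertwine: "\<forall>x\<in>carrier R. h (d x) = d' (h x)"
  using comp by (simp_all add: compatible_def)

interpretation H: abelian_group_hom R S h
  by (rule ring_hom_abelian_group_hom[OF ring_likeD(1)[OF compat_R] ring_likeD(1)[OF compat_S] compat_hom])

lemma ls_map_in_from: "f \<in> ls_from R a \<Longrightarrow> ls_map h f \<in> ls_from S a"
  by (simp add: ls_from_def ls_map_def)

lemma ls_map_t: "ls_map h (ls_t R a) = ls_t S a"
  using compat_hom by (simp add: fun_eq_iff ls_map_def ls_t_def ring_hom_one)

lemma ls_map_const: "ls_map h (ls_const R c) = ls_const S (h c)"
  by (simp add: fun_eq_iff ls_map_def ls_const_def)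

text \<open>The summands of a product coefficient correspond under \<open>h\<close>; summands that become zero
  in \<open>S\<close> are discarded when restricting to the smaller support downstairs.\<close>
lemma ls_map_mult_coeff:
  assumes x: "x \<in> ls_from R a" and y: "y \<in> ls_from R b"
  shows "h (ls_mult R d x y n) = ls_mult S d' (ls_map h x) (ls_map h y) n"
proof -
  let ?T = "\<lambda>(j :: int, k :: nat). add_pow R (int_binom (- j) k) ((d ^^ k) (x (n - j - int k)) \<otimes>\<^bsub>R\<^esub> y j)"
  let ?T' = "\<lambda>(j :: int, k :: nat). add_pow S (int_binom (- j) k) ((d' ^^ k) (h (x (n - j - int k))) \<otimes>\<^bsub>S\<^esub> h (y j))"
  let ?B = "{(j :: int, k :: nat). x (n - j - int k) \<noteq> \<zero>\<^bsub>R\<^esub> \<and> y j \<noteq> \<zero>\<^bsub>R\<^esub>}"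
  let ?A = "{(j :: int, k :: nat). h (x (n - j - int k)) \<noteq> \<zero>\<^bsub>S\<^esub> \<and> h (y j) \<noteq> \<zero>\<^bsub>S\<^esub>}"
  note xc = ls_fromD(1)[OF x] and yc = ls_fromD(1)[OF y]
  have T_in: "?T \<in> ?B \<rightarrow> carrier R"
    using xc yc by (auto intro!: H.G.add.int_pow_closed ring_likeD(3)[OF compat_R]
        zero_fixing_iterate(1)[OF compat_d])
  have hT: "h (?T p) = ?T' p" for p
    using xc yc compat_hom
    by (cases p) (simp add: H.hom_add_pow ring_likeD(3)[OF compat_R] zero_fixing_iterate(1)[OF compat_d]
        ring_hom_mult intertwine_iterate[OF compat_d compat_intertwine])
  have "h (ls_mult R d x y n) = finsum S (\<lambda>p. h (?T p)) ?B"
    unfolding ls_mult_def by (rule H.hom_finsum_additive[OF ls_mult_support_finite[OF x y] T_in])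
  also have "\<dots> = finsum S ?T' ?A"
  proof (rule H.H.add.finprod_mono_neutral_cong_right)
    show "h (?T p) = \<zero>\<^bsub>S\<^esub>" if "p \<in> ?B - ?A" for p
      using that xc yc unfolding hT
      by (cases p) (auto simp: zero_fixing_iterate[OF compat_d'] ring_likeD(5,6)[OF compat_S]
          ring_hom_closed[OF compat_hom] zero_fixing_iterate(1)[OF compat_d'])
    show "(\<lambda>p. h (?T p)) \<in> ?B \<rightarrow> carrier S"
      using T_in H.hom_closed unfolding Pi_iff by blast
  qed (auto simp: ls_mult_support_finite[OF x y] hT)
  also have "\<dots> = ls_mult S d' (ls_map h x) (ls_map h y) n"
    by (simp add: ls_mult_def ls_map_def)
  finally show ?thesis .
qed

lemma ls_map_ring_hom: "ls_map h \<in> ring_hom (LS R d) (LS S d')"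
proof (rule ring_hom_memI)
  fix x y assume "x \<in> carrier (LS R d)" "y \<in> carrier (LS R d)"
  then obtain a b where x: "x \<in> ls_from R a" and y: "y \<in> ls_from R b"
    by (auto simp: ls_carrier_iff)
  show "ls_map h x \<in> carrier (LS S d')"
    using ls_map_in_from[OF x] by (auto simp: ls_carrier_iff)
  show "ls_map h (x \<otimes>\<^bsub>LS R d\<^esub> y) = ls_map h x \<otimes>\<^bsub>LS S d'\<^esub> ls_map h y"
    using ls_map_mult_coeff[OF x y] by (simp add: fun_eq_iff ls_map_def[of h "ls_mult R d x y"])
  show "ls_map h (x \<oplus>\<^bsub>LS R d\<^esub> y) = ls_map h x \<oplus>\<^bsub>LS S d'\<^esub> ls_map h y"
    using ls_fromD(1)[OF x] ls_fromD(1)[OF y] by (simp add: fun_eq_iff ls_map_def)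
next
  show "ls_map h \<one>\<^bsub>LS R d\<^esub> = \<one>\<^bsub>LS S d'\<^esub>"
    using compat_hom by (simp add: fun_eq_iff ls_map_def ls_one_def ring_hom_one)
qed

interpretation LH: abelian_group_hom "LS R d" "LS S d'" "ls_map h"
  by (rule ring_hom_abelian_group_hom[OF LS_abelian_group LS_abelian_group ls_map_ring_hom])
     (simp_all add: ring_likeD(1) compat_R compat_S)

lemma ls_map_mult:
  "f \<in> ls_carrier R \<Longrightarrow> g \<in> ls_carrier R \<Longrightarrow>
   ls_map h (ls_mult R d f g) = ls_mult S d' (ls_map h f) (ls_map h g)"
  using ring_hom_mult[OF ls_map_ring_hom] by simp

text \<open>\<open>D(t\<^sup>i)\<close> is a finite expression in \<open>t\<close>, \<open>c\<close> and the ring operations, hence it is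
  transported by \<open>ls_map h\<close> to the corresponding expression in \<open>h(c)\<close>.\<close>
lemma ls_map_der_t:
  assumes c: "c \<in> carrier R"
  shows "ls_map h (ls_der_t R d c i) = ls_der_t S d' (h c) i"
proof -
  note R = compat_R and d = compat_d
  have neg: "ls_map h (\<lambda>j. \<ominus>\<^bsub>R\<^esub> X j) = (\<lambda>j. \<ominus>\<^bsub>S\<^esub> ls_map h X j)" if "X \<in> ls_carrier R" for X
    using that by (auto simp: fun_eq_iff ls_map_def ls_carrier_iff ls_from_def)
  have neg_closed: "(\<lambda>j. \<ominus>\<^bsub>R\<^esub> X j) \<in> ls_carrier R" if "X \<in> ls_carrier R" for X
    using that by (auto simp: ls_carrier_iff ls_from_def ring_likeD(1)[OF R] abelian_group.a_inv_closed)
  have sum: "ls_map h (finsum (LS R d) F A) = finsum (LS S d') (\<lambda>a. ls_map h (F a)) A"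
    if "finite A" "\<forall>a\<in>A. F a \<in> ls_carrier R" for F A
    using LH.hom_finsum_additive[OF that(1)] that(2) by (simp add: Pi_def)
  have closed: "ls_t R a \<in> ls_carrier R" "ls_const R c \<in> ls_carrier R" for a
    using ls_t_in_from[OF R] ls_const_in_from[OF R c] by (auto simp: ls_carrier_iff)
  note cl = closed ls_mult_closed[OF R d]
  consider "0 < i" | "i < 0" | "i = 0" by linarith
  then show ?thesis
  proof cases
    case 1
    then show ?thesis by (simp add: ls_der_t_def sum neg ls_map_mult ls_map_t ls_map_const cl neg_closed)
  next
    case 2
    then show ?thesis by (simp add: ls_der_t_def sum ls_map_mult ls_map_t ls_map_const cl)
  next
    case 3
    then show ?thesis by (simp add: ls_der_t_def ls_map_def)
  qed
qed

lemma ls_map_der: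
  assumes D: "zero_fixing R D" and hD: "\<forall>x\<in>carrier R. h (D x) = D' (h x)"
    and c: "c \<in> carrier R" and f: "f \<in> ls_from R a"
  shows "ls_map h (ls_der R d D c f) = ls_der S d' D' (h c) (ls_map h f)"
proof (rule ext)
  fix n
  note R = compat_R and d = compat_d
  let ?X = "\<lambda>i. ls_der_term R d c f i n" and ?Y = "\<lambda>i. ls_der_term S d' (h c) (ls_map h f) i n"
  let ?B = "{i. ?X i \<noteq> \<zero>\<^bsub>R\<^esub>}" and ?A = "{i. ?Y i \<noteq> \<zero>\<^bsub>S\<^esub>}"
  have X_in: "?X i \<in> carrier R" for i
    using ls_der_term_in_from[OF R d c ls_fromD(1)[OF f]] by (simp add: ls_from_def)
  have hX: "h (?X i) = ?Y i" for i
  proof -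
    have "ls_map h (ls_der_term R d c f i) = ls_der_term S d' (h c) (ls_map h f) i"
      unfolding ls_der_term_def
      using ls_map_mult[OF ls_from_carrier[OF ls_der_t_in_from[OF R d c]]
          ls_from_carrier[OF ls_const_in_from[OF R ls_fromD(1)[OF f]]]]
      by (simp add: ls_map_const ls_map_der_t[OF c]) (simp add: ls_map_def)
    then show ?thesis by (metis ls_map_def)
  qed
  have finB: "finite ?B"
    by (rule finite_subset[OF ls_der_term_support[OF R d c f]]) simp
  have "ls_map h (ls_der R d D c f) n = h (finsum R ?X ?B) \<oplus>\<^bsub>S\<^esub> h (D (f n))"
    using X_in ls_fromD(1)[OF f] D
    by (simp add: ls_map_def ls_der_eq_term ls_sum_def H.G.finsum_closed zero_fixing_def)
  also have "h (finsum R ?X ?B) = finsum S ?Y ?B"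
    using H.hom_finsum_additive[OF finB, of ?X] X_in by (simp add: hX)
  also have "\<dots> = finsum S ?Y ?A"
    by (rule H.H.add.finprod_mono_neutral_cong_right[OF finB])
       (auto simp: hX[symmetric] X_in)
  also have "h (D (f n)) = D' (ls_map h f n)"
    using hD ls_fromD(1)[OF f] by (simp add: ls_map_def)
  finally show "ls_map h (ls_der R d D c f) n = ls_der S d' D' (h c) (ls_map h f) n"
    by (simp add: ls_der_eq_term[of S] ls_sum_def)
qed

end

lemma compatible_lift:
  assumes comp: "compatible h R S d d'" and D: "zero_fixing R D" and D': "zero_fixing S D'"
    and hD: "\<forall>x\<in>carrier R. h (D x) = D' (h x)" and c: "c \<in> carrier R"
  shows "compatible (ls_map h) (LS R d) (LS S d') (ls_der R d D c) (ls_der S d' D' (h c))"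
proof -
  note R = compat_R[OF comp] and S = compat_S[OF comp] and d = compat_d[OF comp]
    and d' = compat_d'[OF comp]
  have hc: "h c \<in> carrier S" using ring_hom_closed[OF compat_hom[OF comp] c] .
  have "\<forall>f\<in>carrier (LS R d). ls_map h (ls_der R d D c f) = ls_der S d' D' (h c) (ls_map h f)"
    using ls_map_der[OF comp D hD c] by (auto simp: ls_carrier_iff)
  then show ?thesis
    by (simp add: compatible_def LS_ring_like R S d d' ls_der_zero_fixing D D' c hc
        ls_map_ring_hom[OF comp])
qed

lemma ls_map_linear:
  assumes "\<forall>x\<in>carrier R. h (scR c x) = scS c (h x)"
  shows "\<forall>f\<in>carrier (LS R d). ls_map h (ls_sc scR c f) = ls_sc scS c (ls_map h f)"
  using assms by (auto simp: ls_map_def ls_sc_def ls_carrier_iff ls_from_def)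

lemma compatible_k_alg_hom:
  assumes "compatible h R S d d'" and "\<forall>c. \<forall>x\<in>carrier R. h (scR c x) = scS c (h x)"
  shows "k_alg_hom (LS R d) (LS S d') (ls_sc scR) (ls_sc scS) (ls_map h)"
proof -
  have "\<forall>f\<in>carrier (LS R d). ls_map h (ls_sc scR c f) = ls_sc scS c (ls_map h f)" for c
    by (rule ls_map_linear) (use assms(2) in blast)
  then show ?thesis by (simp add: k_alg_hom_def ls_map_ring_hom[OF assms(1)])
qed

lemma ls_der_zero:
  assumes S: "ring_like S"
  shows "ls_der S d (\<lambda>x. \<zero>\<^bsub>S\<^esub>) \<zero>\<^bsub>S\<^esub> = (\<lambda>g i. \<zero>\<^bsub>S\<^esub>)"
proof -
  interpret S: abelian_group S using ring_likeD(1)[OF S] .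
  interpret L: abelian_group "LS S d" using LS_abelian_group[OF ring_likeD(1)[OF S]] .
  have "finsum (LS S d) (\<lambda>a. \<zero>\<^bsub>LS S d\<^esub>) A = \<zero>\<^bsub>LS S d\<^esub>" for A :: "int set"
    by (rule L.finsum_zero)
  moreover have neg_zero: "\<ominus>\<^bsub>S\<^esub> \<zero>\<^bsub>S\<^esub> = \<zero>\<^bsub>S\<^esub>"
    using S.add.inv_one by (simp add: a_inv_def)
  ultimately have "ls_der_t S d \<zero>\<^bsub>S\<^esub> i = (\<lambda>j. \<zero>\<^bsub>S\<^esub>)" for i
    unfolding ls_der_t_def
    by (simp add: neg_zero ls_const_def ls_mult_zero_left ls_mult_zero_right ring_likeD(1)[OF S])
  then show ?thesis
    by (intro ext) (simp add: ls_der_def ls_sum_def ls_mult_zero_left ring_likeD(1)[OF S])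
qed

text \<open>This is the
  situation of \<open>\<delta>\<^sub>u, \<delta>\<^sub>v\<close> over the commutative, untwisted target \<open>k((t\<^sub>z))\<close>.\<close>
lemma compatible_lift_to_zero:
  assumes comp: "compatible h R S d d'" and compD: "compatible h R S D (\<lambda>x. \<zero>\<^bsub>S\<^esub>)"
    and c: "c \<in> carrier R" "h c = \<zero>\<^bsub>S\<^esub>"
  shows "compatible (ls_map h) (LS R d) (LS S d') (ls_der R d D c) (\<lambda>g. \<zero>\<^bsub>LS S d'\<^esub>)"
  using compatible_lift[OF comp compat_d[OF compD] compat_d'[OF compD] compat_intertwine[OF compD] c(1)]
  by (simp add: c(2) ls_der_zero[OF compat_S[OF comp]])

text \<open>Since \<open>H\<close> is two-step nilpotent, \<open>N = ker \<rho>\<close> is an ideal of \<open>L\<close>, and \<open>w = [v, u]\<close>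
  maps to the central element \<open>z\<close>, so \<open>[w, v]\<close> and \<open>[w, u]\<close> lie in \<open>N\<close>.\<close>
lemma heisenberg_kernel:
  assumes hom: "lie_hom sm br heis_sm heis_br \<rho>" and \<rho>u: "\<rho> u = hx" and \<rho>v: "\<rho> v = hy"
  shows "\<rho> n = 0 \<Longrightarrow> \<rho> (br n s) = 0" "\<rho> (br (br v u) v) = 0" "\<rho> (br (br v u) u) = 0"
  using assms by (simp_all add: lie_hom_def heis_br_def hx_def hy_def zero_prod_def)

text \<open>The base of the tower: an augmentation \<open>\<epsilon>\<close> is compatible with every inner derivation
  \<open>\<delta>\<^sub>s\<close> of \<open>U(N)\<close> and the zero map on \<open>k\<close>, since \<open>\<epsilon> \<circ> \<delta>\<^sub>s = 0\<close>.\<close>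
lemma augmentation_compatible:
  fixes sm :: "'k::field \<Rightarrow> 'l::ab_group_add \<Rightarrow> 'l" and \<epsilon> :: "('l list \<Rightarrow> 'k) set \<Rightarrow> 'k"
  assumes N_stable: "\<And>n. n \<in> N \<Longrightarrow> br n s \<in> N"
    and \<epsilon>_hom: "\<epsilon> \<in> ring_hom (UN_ring sm br N) K_ring" and \<epsilon>_N: "\<forall>n\<in>N. \<epsilon> (ul_gen sm br n) = 0"
  shows "compatible \<epsilon> (UN_ring sm br N) K_ring (ul_der sm br s) (\<lambda>x. \<zero>\<^bsub>K_ring\<^esub>)"
proof -
  have "ring_like (UN_ring sm br N)" "ring_like (K_ring :: 'k ring)"
    by (simp_all add: ring_like_ring UN_ring K_ring)
  moreover have "zero_fixing (UN_ring sm br N) (ul_der sm br s)"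
    using ul_der_un_set[where N = N and s = s and br = br and sm = sm, OF N_stable]
    by (simp add: zero_fixing_def ul_der_zero)
  moreover have "\<forall>X\<in>carrier (UN_ring sm br N). \<epsilon> (ul_der sm br s X) = \<zero>\<^bsub>K_ring\<^esub>"
    using augmentation_kills_der[where N = N and s = s and br = br and sm = sm, OF N_stable _ \<epsilon>_hom \<epsilon>_N]
    by simp
  ultimately show ?thesis
    using \<epsilon>_hom by (simp add: compatible_def zero_fixing_def)
qed

theorem mainTheorem8:
  fixes sm :: "'k::field \<Rightarrow> 'l::ab_group_add \<Rightarrow> 'l"
    and br :: "'l \<Rightarrow> 'l \<Rightarrow> 'l"
    and \<rho> :: "'l \<Rightarrow> 'k \<times> 'k \<times> 'k"
    and u v :: 'l
    and \<epsilon> :: "('l list \<Rightarrow> 'k) set \<Rightarrow> 'k"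
  assumes L: "lie_algebra sm br"
    and gen: "lie_gen sm br {u, v} = UNIV"
    and hom: "lie_hom sm br heis_sm heis_br \<rho>"
    and \<rho>u: "\<rho> u = hx" and \<rho>v: "\<rho> v = hy"
  defines "N \<equiv> {a. \<rho> a = 0}"
    and "w \<equiv> br v u"
  assumes aug: "k_alg_hom (UN_ring sm br N) K_ring (ul_sc sm br) (*) \<epsilon>"
    and aug0: "\<forall>n\<in>N. \<epsilon> (ul_gen sm br n) = 0"
  defines "UNr \<equiv> UN_ring sm br N"
  defines "\<delta>w \<equiv> ul_der sm br w"
  defines "\<delta>v \<equiv> ul_der sm br v"
  defines "\<delta>u \<equiv> ul_der sm br u"
  defines "R1 \<equiv> LS UNr \<delta>w"
  defines "\<delta>v1 \<equiv> ls_der UNr \<delta>w \<delta>v (\<delta>v (ul_gen sm br w))"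
  defines "\<delta>u1 \<equiv> ls_der UNr \<delta>w \<delta>u (\<delta>u (ul_gen sm br w))"
  defines "R2 \<equiv> LS R1 \<delta>v1"
  defines "\<delta>u2 \<equiv> ls_der R1 \<delta>v1 \<delta>u1 (ls_t UNr (-1))"
  defines "R3 \<equiv> LS R2 \<delta>u2"
  defines "T1 \<equiv> LS (K_ring :: 'k ring) (\<lambda>a. 0)"
  defines "T2 \<equiv> LS T1 (\<lambda>f. zero T1)"
  defines "\<delta>x \<equiv> ls_der T1 (\<lambda>f. zero T1) (\<lambda>f. zero T1) (ls_t (K_ring :: 'k ring) (-1))"
  defines "T3 \<equiv> LS T2 \<delta>x"
  defines "\<Phi>w \<equiv> ls_map \<epsilon>"
  defines "\<Phi>v \<equiv> ls_map \<Phi>w"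
  defines "\<Phi>u \<equiv> ls_map \<Phi>v"
  shows "k_alg_hom R1 T1 (ls_sc (ul_sc sm br)) (ls_sc (*)) \<Phi>w
       \<and> k_alg_hom R2 T2 (ls_sc (ls_sc (ul_sc sm br))) (ls_sc (ls_sc (*))) \<Phi>v
       \<and> k_alg_hom R3 T3 (ls_sc (ls_sc (ls_sc (ul_sc sm br)))) (ls_sc (ls_sc (ls_sc (*)))) \<Phi>u"
proof -
  note kernel = heisenberg_kernel[OF hom \<rho>u \<rho>v]
  have base: "compatible \<epsilon> UNr K_ring (ul_der sm br s) (\<lambda>x. \<zero>\<^bsub>K_ring\<^esub>)" for s
    using aug aug0 kernel(1) unfolding UNr_def
    by (intro augmentation_compatible) (auto simp: N_def k_alg_hom_def)
  \<comment> \<open>\<open>\<delta>\<^sub>v(w) = [w, v]\<close> and \<open>\<delta>\<^sub>u(w) = [w, u]\<close> lie in \<open>N\<close>, hence are killed by \<open>\<epsilon>\<close>\<close>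
  have gen_w: "ul_der sm br s (ul_gen sm br w) \<in> carrier UNr" "\<epsilon> (ul_der sm br s (ul_gen sm br w)) = 0"
    if "s \<in> {u, v}" for s
    using that aug0 kernel(2,3) by (auto simp: UNr_def ul_der_gen N_def w_def un_set.gen)
  have level1_v: "compatible \<Phi>w R1 T1 \<delta>v1 (\<lambda>f. zero T1)"
    and level1_u: "compatible \<Phi>w R1 T1 \<delta>u1 (\<lambda>f. zero T1)"
    using compatible_lift_to_zero[OF base base] gen_w
    by (simp_all add: \<Phi>w_def R1_def T1_def \<delta>u1_def \<delta>v1_def \<delta>u_def \<delta>v_def \<delta>w_def)
  have t_in: "ls_t UNr (-1) \<in> carrier R1"
    using ls_t_in_from[OF compat_R[OF base]] by (auto simp: R1_def ls_carrier_iff)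
  have level2: "compatible \<Phi>v R2 T2 \<delta>u2 \<delta>x"
    using compatible_lift[OF level1_v compat_d[OF level1_u] compat_d'[OF level1_u]
        compat_intertwine[OF level1_u] t_in]
    by (simp add: \<Phi>v_def R2_def T2_def \<delta>u2_def \<delta>x_def \<Phi>w_def ls_map_t[OF base])
  have linear: "\<forall>c. \<forall>x\<in>carrier UNr. \<epsilon> (ul_sc sm br c x) = c * \<epsilon> x"
    using aug by (simp add: UNr_def k_alg_hom_def)
  have linear1: "\<forall>c. \<forall>x\<in>carrier R1. \<Phi>w (ls_sc (ul_sc sm br) c x) = ls_sc (*) c (\<Phi>w x)"
    unfolding \<Phi>w_def R1_def by (intro allI ls_map_linear) (use linear in blast)
  have linear2: "\<forall>c. \<forall>x\<in>carrier R2. \<Phi>v (ls_sc (ls_sc (ul_sc sm br)) c x) = ls_sc (ls_sc (*)) c (\<Phi>v x)"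
    unfolding \<Phi>v_def R2_def by (intro allI ls_map_linear) (use linear1 in blast)
  show ?thesis
    using compatible_k_alg_hom[OF base linear] compatible_k_alg_hom[OF level1_v linear1]
      compatible_k_alg_hom[OF level2 linear2]
    by (simp add: \<Phi>w_def \<Phi>v_def \<Phi>u_def R1_def R2_def R3_def T1_def T2_def T3_def \<delta>w_def)
qed

end
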